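(* Assume (H1) and (H2). Fix $\varepsilon>0$, let $\alpha=2/5$ and let $\delta,\gamma,\rho>0$ be such that $\mathbb{P}_n(\Omega_n^{\alpha,\delta,\gamma,\rho})\ge1-\varepsilon$ for all $n$ large enough; write $\Omega_\varepsilon=\Omega_n^{\alpha,\delta,\gamma,\rho}$. For any $\alpha'>0$ and $a>0$ there exist $\beta>0$, $c>0$ such that for any $s,t\in[0,1]$ with $|s-t|\le(\log n)^{-3}$, for $n$ large enough, $$\mathbb{E}_n\big(\|\mathbf{G}^{(n)}_s-\mathbf{G}^{(n)}_t\|_1^\beta\mathbb{1}_{\Omega_\varepsilon}\big)\le c|t-s|^{1+a}.$$
   Context: Planar trees: finite subsets $T$ of the set of finite words over $\{1,2,\dots\}$ containing the empty word $\emptyset$, with $ui\in T\Rightarrow u\in T$ and $uj\in T$ for $1\le j\le i$; $c_u(T)$ number of children, $|u|$ word length, $d$ graph distance; vertices ordered lexicographically (prefixes first), $u(k)$ the $k$-th vertex, $u(0)=\emptyset$; $\mathcal{T}_n$: trees with $n+1$ vertices. (H1): $\mu=(\mu_k)_{k\ge0}$ probability on $\mathbb{N}$ with $\mu_0+\mu_1\ne1$, $\sum_kk\mu_k=1$, $\sum_{k\le K}\mu_k=1$ for some integer $K>0$. $\mathbf{T}$: GW tree with offspring law $\mu$; $\mathbb{P}_n=\mathbb{P}(\cdot\mid|\mathbf{T}|=n+1)$, $\mathbb{E}_n$ its expectation. (H2): for $k\ge1$, $\nu_k$ probability on $\mathbb{R}^k$, $(Y_{k,1},\dots,Y_{k,k})\sim\nu_k$,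 $m_{k,j}=\mathbb{E}Y_{k,j}$; require $\sum_k\sum_{j\le k}\mu_km_{k,j}=0$, $\sum_k\sum_{j\le k}\mu_k\mathbb{E}(Y^2_{k,j})\in(0,\infty)$, and some $p>4$ with $\mathbb{E}|Y_{k,j}-m_{k,j}|^p<\infty$ for all $1\le j\le k\le K$. $I_K=\{(k,j):1\le j\le k\le K\}$; $\|X\|_1=\sum_{I_K}|X_{k,j}|$. $A_{u,k,j}$: number of strict ancestors $v$ of $u$ with $c_v=k$ and $u$ descending from (or equal to) $vj$; $A_{u,l,k,j}$: number of those with moreover $d(u,v)\le l$. $\mathbf{G}^{(n)}_{k,j}(s)=n^{-1/4}[\mathbf{g}(\lfloor ns\rfloor)+\{ns\}(\mathbf{g}(\lfloor ns\rfloor+1)-\mathbf{g}(\lfloor ns\rfloor))]$ with $\mathbf{g}(l)=A_{u(l),k,j}-\mu_k|u(l)|$. $\mathbf{h}_n(s)=H_{ns}/\sqrt n$ with $H$ the interpolation of $k\mapsto|u(k)|$. $\Omega_n^{\alpha,\delta,\gamma,\rho}$: set of $T\in\mathcal{T}_n$ with $|\mathbf{h}_n(s)-\mathbf{h}_n(t)|\le\delta|t-s|^\alpha$ for all $s,t\in[0,1]$, $\max_l||u(l+1)|-|u(l)||\le\rho\log n$, $|u(n)|<\rho\log n$, and $|A_{u,l,k,j}-\mu_kl|\le\gamma\sqrt{l\log n}$ for all $(k,j)\in I_K$, $u\in T$, $l\in(0,|u|]$. *)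

theory Defs
  imports "HOL-Probability.Probability"
begin

type_synonym word = "nat list"

text \<open>The child \<open>u i\<close> of a word \<open>u\<close> is \<open>u @ [i]\<close>; letters are \<open>\<ge> 1\<close>.\<close>
definition planar_tree :: "word set \<Rightarrow> bool" where
  "planar_tree T \<longleftrightarrow> finite T \<and> [] \<in> T \<and> (\<forall>w\<in>T. \<forall>x\<in>set w. 1 \<le> x) \<and>
     (\<forall>u i. u @ [i] \<in> T \<longrightarrow> u \<in> T \<and> (\<forall>j. 1 \<le> j \<and> j \<le> i \<longrightarrow> u @ [j] \<in> T))"

definition trees_n :: "nat \<Rightarrow> word set set" where
  "trees_n n = {T. planar_tree T \<and> card T = n + 1}"

definition nchildren :: "word set \<Rightarrow> word \<Rightarrow> nat" where
  "nchildren T u = card {i. u @ [i] \<in> T}"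

text \<open>Lexicographic order, prefixes first.\<close>
definition lexless :: "word \<Rightarrow> word \<Rightarrow> bool" where
  "lexless v w \<longleftrightarrow> (v, w) \<in> lexord {(a, b). a < (b::nat)}"

text \<open>\<open>vtx T k\<close> is the \<open>k\<close>-th vertex \<open>u(k)\<close> (with \<open>u(0)\<close> the root).\<close>
definition vtx :: "word set \<Rightarrow> nat \<Rightarrow> word" where
  "vtx T k = (THE v. v \<in> T \<and> card {w\<in>T. lexless w v} = k)"

definition interp :: "(nat \<Rightarrow> real) \<Rightarrow> real \<Rightarrow> real" where
  "interp g x = g (nat \<lfloor>x\<rfloor>) + frac x * (g (nat \<lfloor>x\<rfloor> + 1) - g (nat \<lfloor>x\<rfloor>))"

definition hproc :: "nat \<Rightarrow> word set \<Rightarrow> real \<Rightarrow> real" where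
  "hproc n T s = interp (\<lambda>k. real (length (vtx T k))) (real n * s) / sqrt (real n)"

definition Acount :: "word set \<Rightarrow> word \<Rightarrow> nat \<Rightarrow> nat \<Rightarrow> nat" where
  "Acount T u k j = card {v. strict_prefix v u \<and> nchildren T v = k \<and> prefix (v @ [j]) u}"

definition Acount_l :: "word set \<Rightarrow> word \<Rightarrow> nat \<Rightarrow> nat \<Rightarrow> nat \<Rightarrow> nat" where
  "Acount_l T u l k j = card {v. strict_prefix v u \<and> nchildren T v = k \<and> prefix (v @ [j]) u
                              \<and> length u - length v \<le> l}"

definition IK :: "nat \<Rightarrow> (nat \<times> nat) set" where
  "IK K = {(k, j). 1 \<le> j \<and> j \<le> k \<and> k \<le> K}"

definition Gproc :: "(nat \<Rightarrow> real) \<Rightarrow> nat \<Rightarrow> word set \<Rightarrow> nat \<times> nat \<Rightarrow> real \<Rightarrow> real" where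
  "Gproc \<mu> n T kj s = real n powr (-1/4) *
     interp (\<lambda>l. real (Acount T (vtx T l) (fst kj) (snd kj)) - \<mu> (fst kj) * real (length (vtx T l)))
            (real n * s)"

definition G_l1dist :: "(nat \<Rightarrow> real) \<Rightarrow> nat \<Rightarrow> nat \<Rightarrow> word set \<Rightarrow> real \<Rightarrow> real \<Rightarrow> real" where
  "G_l1dist \<mu> K n T s t = (\<Sum>kj\<in>IK K. \<bar>Gproc \<mu> n T kj s - Gproc \<mu> n T kj t\<bar>)"

definition gw_weight :: "(nat \<Rightarrow> real) \<Rightarrow> word set \<Rightarrow> real" where
  "gw_weight \<mu> T = (\<Prod>u\<in>T. \<mu> (nchildren T u))"

text \<open>\<open>P(|T| = n+1)\<close>.\<close>
definition gw_Z :: "(nat \<Rightarrow> real) \<Rightarrow> nat \<Rightarrow> real" where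
  "gw_Z \<mu> n = (\<Sum>T\<in>trees_n n. gw_weight \<mu> T)"

text \<open>\<open>E_n f\<close> (expectation under \<open>P(\<cdot> | |T| = n+1)\<close>).\<close>
definition En :: "(nat \<Rightarrow> real) \<Rightarrow> nat \<Rightarrow> (word set \<Rightarrow> real) \<Rightarrow> real" where
  "En \<mu> n f = (\<Sum>T\<in>trees_n n. gw_weight \<mu> T * f T) / gw_Z \<mu> n"

definition Pn :: "(nat \<Rightarrow> real) \<Rightarrow> nat \<Rightarrow> word set set \<Rightarrow> real" where
  "Pn \<mu> n A = En \<mu> n (indicator A)"

definition Omega :: "nat \<Rightarrow> nat \<Rightarrow> real \<Rightarrow> real \<Rightarrow> real \<Rightarrow> real \<Rightarrow> (nat \<Rightarrow> real) \<Rightarrow> word set set" where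
  "Omega K n \<alpha> \<delta> \<gamma> \<rho> \<mu> = {T \<in> trees_n n.
      (\<forall>s\<in>{0..1}. \<forall>t\<in>{0..1}. \<bar>hproc n T s - hproc n T t\<bar> \<le> \<delta> * \<bar>t - s\<bar> powr \<alpha>) \<and>
      (\<forall>l<n. \<bar>real (length (vtx T (l+1))) - real (length (vtx T l))\<bar> \<le> \<rho> * ln (real n)) \<and>
      real (length (vtx T n)) < \<rho> * ln (real n) \<and>
      (\<forall>kj\<in>IK K. \<forall>u\<in>T. \<forall>l. 0 < l \<and> l \<le> length u \<longrightarrow>
          \<bar>real (Acount_l T u l (fst kj) (snd kj)) - \<mu> (fst kj) * real l\<bar>
            \<le> \<gamma> * sqrt (real l * ln (real n)))}"

definition H1 :: "(nat \<Rightarrow> real) \<Rightarrow> nat \<Rightarrow> bool" where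
  "H1 \<mu> K \<longleftrightarrow> 0 < K \<and> (\<forall>k. 0 \<le> \<mu> k) \<and> (\<forall>k>K. \<mu> k = 0) \<and> (\<Sum>k\<le>K. \<mu> k) = 1 \<and>
     \<mu> 0 + \<mu> 1 \<noteq> 1 \<and> (\<Sum>k\<le>K. real k * \<mu> k) = 1"

text \<open>\<open>\<nu> k\<close> is a probability law on \<open>\<real>^k\<close>, coordinates indexed by \<open>{1..k}\<close>;
  \<open>Y_{k,j}\<close> is the \<open>j\<close>-th coordinate.\<close>
definition H2 :: "(nat \<Rightarrow> real) \<Rightarrow> nat \<Rightarrow> (nat \<Rightarrow> (nat \<Rightarrow> real) measure) \<Rightarrow> bool" where
  "H2 \<mu> K \<nu> \<longleftrightarrow>
     (\<forall>k\<ge>1. prob_space (\<nu> k) \<and> sets (\<nu> k) = sets (PiM {1..k} (\<lambda>_. borel))) \<and>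
     (\<forall>(k,j)\<in>IK K. integrable (\<nu> k) (\<lambda>y. y j) \<and> integrable (\<nu> k) (\<lambda>y. (y j)\<^sup>2)) \<and>
     (\<Sum>(k,j)\<in>IK K. \<mu> k * (\<integral>y. y j \<partial>\<nu> k)) = 0 \<and>
     0 < (\<Sum>(k,j)\<in>IK K. \<mu> k * (\<integral>y. (y j)\<^sup>2 \<partial>\<nu> k)) \<and>
     (\<exists>p>4. \<forall>(k,j)\<in>IK K. integrable (\<nu> k) (\<lambda>y. \<bar>y j - (\<integral>z. z j \<partial>\<nu> k)\<bar> powr p))"

end

theory Submission
  imports Defs
begin

text \<open>On the good event the estimate is deterministic. For times \<open>i < j\<close> the depth-first
  walk visits the child of the branch point of \<open>u(i)\<close> and \<open>u(j)\<close>, so the Hoelder bound on the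
  height process puts both vertices within depth \<open>M \<approx> \<delta> n\<^sup>1\<^sup>/\<^sup>1\<^sup>0 (j - i)\<^sup>2\<^sup>/\<^sup>5\<close> below a common
  ancestor. Ancestors above it are shared, those below are controlled by the ancestor-count
  bound of \<open>\<Omega>\<close>, so \<open>|g(i) - g(j)| \<le> 2\<gamma>\<surd>((M + 1) log n)\<close>. Thus \<open>G\<^sup>(\<^sup>n\<^sup>)\<close> is \<open>1/5\<close>-Hoelder with
  constant \<open>O(\<surd>log n)\<close>; for \<open>|s - t| \<le> (log n)\<^sup>-\<^sup>3\<close> the \<open>\<surd>log n\<close> is absorbed into
  \<open>|s - t|\<^sup>1\<^sup>/\<^sup>3\<^sup>0\<close>, and the power \<open>\<beta> = 30 (1 + a)\<close> gives the claim.\<close>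

lemma lexless_irrefl: "\<not> lexless v v"
  unfolding lexless_def by (rule lexord_irreflexive) auto

lemma lexless_trans: "lexless u v \<Longrightarrow> lexless v w \<Longrightarrow> lexless u w"
  unfolding lexless_def by (erule lexord_trans) (auto simp: trans_def)

lemma lexless_linear: "lexless u v \<or> u = v \<or> lexless v u"
  unfolding lexless_def by (rule lexord_linear) auto

lemma lexless_asym: "lexless u v \<Longrightarrow> \<not> lexless v u"
  using lexless_irrefl lexless_trans by blast

lemma lexless_strict_prefix: "strict_prefix u v \<Longrightarrow> lexless u v"
  unfolding lexless_def strict_prefix_def prefix_def
  by (metis append_Nil2 lexord_append_rightI neq_Nil_conv)

lemma lexless_branch: "a < b \<Longrightarrow> lexless (w @ a # x) (w @ b # y)"
  unfolding lexless_def by (rule lexord_append_left_rightI) simp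

definition vertex_rank :: "word set \<Rightarrow> word \<Rightarrow> nat" where
  "vertex_rank T v = card {w\<in>T. lexless w v}"

lemma vertex_rank_less_card: "finite T \<Longrightarrow> v \<in> T \<Longrightarrow> vertex_rank T v < card T"
  unfolding vertex_rank_def by (rule psubset_card_mono) (use lexless_irrefl in blast)+

lemma vertex_rank_strict_mono:
  assumes "finite T" "v \<in> T" "lexless v v'"
  shows "vertex_rank T v < vertex_rank T v'"
  unfolding vertex_rank_def
proof (rule psubset_card_mono)
  show "finite {w \<in> T. lexless w v'}" using assms by simp
  show "{w \<in> T. lexless w v} \<subset> {w \<in> T. lexless w v'}"
    using assms lexless_trans lexless_irrefl by blast
qed

lemma inj_on_vertex_rank: "finite T \<Longrightarrow> inj_on (vertex_rank T) T"
  by (rule inj_onI) (metis lexless_linear vertex_rank_strict_mono less_irrefl)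

lemma vertex_rank_image: "finite T \<Longrightarrow> vertex_rank T ` T = {..<card T}"
  by (rule card_subset_eq)
    (auto simp: card_image inj_on_vertex_rank vertex_rank_less_card)

lemma vtx_vertex_rank:
  assumes "finite T" "v \<in> T"
  shows "vtx T (vertex_rank T v) = v"
  unfolding vtx_def
proof (rule the_equality)
  show "v \<in> T \<and> card {w \<in> T. lexless w v} = vertex_rank T v"
    using assms by (simp add: vertex_rank_def)
  show "w = v" if "w \<in> T \<and> card {w' \<in> T. lexless w' w} = vertex_rank T v" for w
    using that inj_on_vertex_rank[OF assms(1)] assms(2)
    by (auto simp: vertex_rank_def inj_on_def)
qed

lemma vtx_in_tree:
  assumes "finite T" "k < card T"
  shows "vtx T k \<in> T" and "vertex_rank T (vtx T k) = k"
proof -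
  obtain v where "v \<in> T" "vertex_rank T v = k"
    using assms vertex_rank_image by (metis imageE lessThan_iff)
  then show "vtx T k \<in> T" "vertex_rank T (vtx T k) = k"
    using vtx_vertex_rank[OF assms(1)] by auto
qed

lemma vtx_lexless:
  assumes "finite T" "i < j" "j < card T"
  shows "lexless (vtx T i) (vtx T j)"
  using lexless_linear[of "vtx T i" "vtx T j"] vtx_in_tree[OF assms(1)] assms
    vertex_rank_strict_mono[OF assms(1), of "vtx T j" "vtx T i"]
  by (metis less_asym order.strict_trans)

lemma planar_tree_prefix_closed:
  assumes "planar_tree T" "v \<in> T" "prefix p v"
  shows "p \<in> T"
  using assms(2,3)
proof (induction v rule: rev_induct)
  case (snoc x xs)
  then show ?case using assms(1) unfolding planar_tree_def by (metis prefix_snoc)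
qed simp

text \<open>If \<open>u(j)\<close> does not descend from \<open>u(i)\<close>, the child of their longest common prefix
  \<open>w\<close> towards \<open>u(j)\<close> lies lexicographically between them, so it is visited at some time
  in \<open>(i, j]\<close>.\<close>
lemma vtx_branch_point:
  assumes T: "planar_tree T" and ij: "i < j" "j < card T"
  obtains w where "prefix w (vtx T i)" "prefix w (vtx T j)"
    "w = vtx T i \<or> (\<exists>k. i < k \<and> k \<le> j \<and> length (vtx T k) = length w + 1)"
proof -
  have f: "finite T" using T unfolding planar_tree_def by simp
  define u v where "u = vtx T i" and "v = vtx T j"
  have uv: "lexless u v" unfolding u_def v_def by (rule vtx_lexless[OF f ij])
  define w where "w = longest_common_prefix u v"
  obtain x y where x: "u = w @ x" and y: "v = w @ y"
    using longest_common_prefix_prefix1[of u v] longest_common_prefix_prefix2[of u v]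
    unfolding w_def prefix_def by blast
  show thesis
  proof (cases x)
    case Nil
    then show thesis using that x y unfolding u_def v_def by auto
  next
    case (Cons a x')
    obtain b y' where y': "y = b # y'"
      using uv x y Cons lexless_strict_prefix lexless_asym
      by (metis append.right_neutral neq_Nil_conv strict_prefixI')
    have "a \<noteq> b"
    proof
      assume "a = b"
      then have "prefix (w @ [a]) u" "prefix (w @ [a]) v" using x y y' Cons by auto
      then have "prefix (w @ [a]) w" unfolding w_def by (rule longest_common_prefix_max_prefix)
      then show False by (simp add: prefix_def)
    qed
    moreover have "\<not> b < a" using lexless_branch uv x y y' Cons lexless_asym by blast
    ultimately have ab: "a < b" by simp
    define z where "z = w @ [b]"
    have zT: "z \<in> T" using planar_tree_prefix_closed[OF T] vtx_in_tree[OF f] ij y y'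
      unfolding v_def z_def by (metis prefix_def append_Cons append_Nil append_assoc)
    have "lexless u z" using lexless_branch[OF ab, of w x' "[]"] x Cons unfolding z_def by simp
    then have "i < vertex_rank T z"
      using vertex_rank_strict_mono[OF f _, of u z] vtx_in_tree[OF f, of i] ij unfolding u_def by simp
    moreover have "vertex_rank T z \<le> j"
      using lexless_strict_prefix[of z v] vertex_rank_strict_mono[OF f zT, of v] vtx_in_tree[OF f, of j] ij y y'
      unfolding z_def v_def by (cases y') (auto simp: strict_prefix_def)
    moreover have "length (vtx T (vertex_rank T z)) = length w + 1"
      using vtx_vertex_rank[OF f zT] unfolding z_def by simp
    ultimately show thesis using that[of w] x y unfolding u_def v_def by auto
  qed
qed

definition ancestors_above :: "word set \<Rightarrow> word \<Rightarrow> nat \<Rightarrow> nat \<Rightarrow> nat \<Rightarrow> word set" where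
  "ancestors_above T u d k j =
     {v. strict_prefix v u \<and> nchildren T v = k \<and> prefix (v @ [j]) u \<and> length v < d}"

lemma Acount_split:
  assumes "d \<le> length u"
  shows "Acount T u k j = card (ancestors_above T u d k j) + Acount_l T u (length u - d) k j"
proof -
  let ?A = "{v. strict_prefix v u \<and> nchildren T v = k \<and> prefix (v @ [j]) u}"
  let ?far = "ancestors_above T u d k j"
  let ?near = "{v. strict_prefix v u \<and> nchildren T v = k \<and> prefix (v @ [j]) u
                  \<and> length u - length v \<le> length u - d}"
  have fin: "finite ?A" by (rule finite_subset[of _ "set (prefixes u)"]) auto
  have "?A = ?far \<union> ?near"
    using assms by (auto simp: ancestors_above_def)
  moreover have "?far \<inter> ?near = {}"
    using assms by (auto simp: ancestors_above_def dest: prefix_length_less)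
  ultimately have "card ?A = card ?far + card ?near"
    using fin by (simp add: card_Un_disjoint)
  then show ?thesis unfolding Acount_def Acount_l_def .
qed

lemma ancestors_above_common_prefix:
  assumes "prefix w u" "prefix w u'"
  shows "ancestors_above T u (length w) k j = ancestors_above T u' (length w) k j"
proof -
  have "ancestors_above T u (length w) k j \<subseteq> ancestors_above T u' (length w) k j"
    if "prefix w u" "prefix w u'" for u u'
  proof
    fix v assume "v \<in> ancestors_above T u (length w) k j"
    then have v: "nchildren T v = k" "prefix (v @ [j]) u" "length v < length w"
      by (auto simp: ancestors_above_def)
    have "prefix (v @ [j]) w" using prefix_length_prefix[OF v(2) that(1)] v(3) by simp
    then have "prefix (v @ [j]) u'" using that(2) by (rule prefix_order.trans)
    moreover have "strict_prefix v (v @ [j])" by (simp add: strict_prefix_def)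
    ultimately show "v \<in> ancestors_above T u' (length w) k j"
      using v unfolding ancestors_above_def by (blast intro: prefix_order.less_le_trans)
  qed
  then show ?thesis using assms by blast
qed

lemma Acount_centred_diff:
  assumes "prefix w u" "prefix w u'"
  shows "real (Acount T u k j) - m * real (length u) - (real (Acount T u' k j) - m * real (length u'))
    = (real (Acount_l T u (length u - length w) k j) - m * real (length u - length w))
     - (real (Acount_l T u' (length u' - length w) k j) - m * real (length u' - length w))"
proof -
  have "length w \<le> length u" "length w \<le> length u'"
    using assms by (simp_all add: prefix_length_le)
  then show ?thesis
    using Acount_split[of "length w" u T k j] Acount_split[of "length w" u' T k j]
      ancestors_above_common_prefix[OF assms, of T k j]
    by (simp add: of_nat_diff algebra_simps)
qed

lemma Acount_l_zero: "Acount_l T u 0 k j = 0"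
proof -
  have "{v. strict_prefix v u \<and> nchildren T v = k \<and> prefix (v @ [j]) u
          \<and> length u - length v \<le> 0} = {}"
    by (auto dest: prefix_length_less)
  then show ?thesis unfolding Acount_l_def by (simp only: card.empty)
qed

lemma interp_of_nat [simp]: "interp g (real m) = g m"
  by (simp add: interp_def frac_def)

lemma interp_on_cell:
  assumes "real m \<le> x" "x \<le> real m + 1"
  shows "interp g x = g m + (x - real m) * (g (m + 1) - g m)"
proof (cases "x = real m + 1")
  case True
  have "interp g (real (m + 1)) = g (m + 1)" by (rule interp_of_nat)
  then show ?thesis using True by (simp add: add.commute)
next
  case False
  then have "\<lfloor>x\<rfloor> = int m" using assms by (simp add: floor_eq_iff)
  then show ?thesis by (simp add: interp_def frac_def)
qed

lemma le_self_powr: "0 \<le> t \<Longrightarrow> t \<le> 1 \<Longrightarrow> \<theta> \<le> 1 \<Longrightarrow> t \<le> t powr (\<theta>::real)"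
  using powr_mono'[of \<theta> 1 t] by simp

context
  fixes f :: "nat \<Rightarrow> real" and C \<theta> :: real and N :: nat
  assumes C_nonneg: "0 \<le> C" and \<theta>: "0 \<le> \<theta>" "\<theta> \<le> 1"
    and f_holder: "\<And>i j. i \<le> N \<Longrightarrow> j \<le> N \<Longrightarrow> \<bar>f i - f j\<bar> \<le> C * \<bar>real i - real j\<bar> powr \<theta>"
begin

lemma interp_cell_holder:
  assumes "m + 1 \<le> N" "real m \<le> x" "x \<le> y" "y \<le> real m + 1"
  shows "\<bar>interp f x - interp f y\<bar> \<le> C * (y - x) powr \<theta>"
proof -
  have "interp f x - interp f y = (x - y) * (f (m + 1) - f m)"
    using interp_on_cell[of m x f] interp_on_cell[of m y f] assms by (simp add: algebra_simps)
  then have "\<bar>interp f x - interp f y\<bar> = (y - x) * \<bar>f (m + 1) - f m\<bar>"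
    using assms by (simp add: abs_mult)
  also have "\<dots> \<le> (y - x) * C"
    using f_holder[of "m + 1" m] assms by (intro mult_left_mono) auto
  also have "\<dots> \<le> C * (y - x) powr \<theta>"
    using le_self_powr[of "y - x" \<theta>] assms \<theta> C_nonneg by (simp add: mult.commute mult_left_mono)
  finally show ?thesis .
qed

text \<open>Split \<open>[x, y]\<close> at the grid points \<open>\<lceil>x\<rceil> \<le> \<lfloor>y\<rfloor>\<close>: two partial cells and one grid increment.\<close>
lemma interp_holder_le:
  assumes "0 \<le> x" "x \<le> y" "y \<le> real N"
  shows "\<bar>interp f x - interp f y\<bar> \<le> 3 * C * (y - x) powr \<theta>"
proof -
  define i j where "i = nat \<lceil>x\<rceil>" and "j = nat \<lfloor>y\<rfloor>"
  have i: "real i - 1 < x" "x \<le> real i" unfolding i_def using assms by linarith+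
  have j: "real j \<le> y" "y < real j + 1" unfolding j_def using assms by linarith+
  have below: "C * t powr \<theta> \<le> C * (y - x) powr \<theta>" if "0 \<le> t" "t \<le> y - x" for t
    using that C_nonneg \<theta> by (intro mult_left_mono powr_mono2) auto
  have nonneg: "0 \<le> C * (y - x) powr \<theta>" using C_nonneg by simp
  show ?thesis
  proof (cases "i \<le> j")
    case False
    then have "real j + 1 \<le> real i" by linarith
    then have "j + 1 \<le> N" "real j \<le> x" using i j assms by linarith+
    then show ?thesis using interp_cell_holder[of j x y] assms j nonneg by linarith
  next
    case True
    have left: "\<bar>interp f x - f i\<bar> \<le> C * (y - x) powr \<theta>"
    proof (cases "i = 0")
      case True
      then show ?thesis using i assms nonneg interp_of_nat[of f 0] by simp
    next
      case False
      then have "\<bar>interp f x - interp f (real (i - 1 + 1))\<bar> \<le> C * (real i - x) powr \<theta>"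
        using interp_cell_holder[of "i - 1" x "real i"] i j True assms by (simp add: of_nat_diff)
      then show ?thesis using below[of "real i - x"] i j True False by simp
    qed
    have middle: "\<bar>f i - f j\<bar> \<le> C * (y - x) powr \<theta>"
      using f_holder[of i j] below[of "\<bar>real i - real j\<bar>"] i j True assms by simp
    have right: "\<bar>f j - interp f y\<bar> \<le> C * (y - x) powr \<theta>"
    proof (cases "y = real j")
      case True
      then show ?thesis using nonneg by simp
    next
      case False
      then have "j + 1 \<le> N" using j assms by linarith
      then have "\<bar>interp f (real j) - interp f y\<bar> \<le> C * (y - real j) powr \<theta>"
        using interp_cell_holder[of j "real j" y] j by simp
      then show ?thesis using below[of "y - real j"] i j True by simp
    qed
    show ?thesis using left middle right by linarith
  qed
qed

lemma interp_holder:
  assumes "x \<in> {0..real N}" "y \<in> {0..real N}"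
  shows "\<bar>interp f x - interp f y\<bar> \<le> 3 * C * \<bar>x - y\<bar> powr \<theta>"
  using interp_holder_le[of x y] interp_holder_le[of y x] assms
  by (cases "x \<le> y") (auto simp: abs_minus_commute)

end

definition ancestor_excess :: "(nat \<Rightarrow> real) \<Rightarrow> word set \<Rightarrow> nat \<times> nat \<Rightarrow> nat \<Rightarrow> real" where
  "ancestor_excess \<mu> T kj l =
     real (Acount T (vtx T l) (fst kj) (snd kj)) - \<mu> (fst kj) * real (length (vtx T l))"

lemma Gproc_eq: "Gproc \<mu> n T kj s = real n powr (-1/4) * interp (ancestor_excess \<mu> T kj) (real n * s)"
  unfolding Gproc_def ancestor_excess_def ..

lemma Omega_depth_holder:
  assumes T: "T \<in> Omega K n \<alpha> \<delta> \<gamma> \<rho> \<mu>" and n: "n > 0" and "i \<le> n" "k \<le> n"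
  shows "\<bar>real (length (vtx T i)) - real (length (vtx T k))\<bar>
           \<le> \<delta> * sqrt (real n) * (\<bar>real k - real i\<bar> / real n) powr \<alpha>"
proof -
  have "real i / real n \<in> {0..1}" "real k / real n \<in> {0..1}" using assms by auto
  then have "\<bar>hproc n T (real i / real n) - hproc n T (real k / real n)\<bar>
       \<le> \<delta> * \<bar>real k / real n - real i / real n\<bar> powr \<alpha>"
    using T unfolding Omega_def by blast
  moreover have "hproc n T (real m / real n) = real (length (vtx T m)) / sqrt (real n)" for m
    using n by (simp add: hproc_def)
  ultimately show ?thesis
    using n by (simp add: diff_divide_distrib[symmetric] abs_div divide_le_eq mult_ac)
qed

lemma Omega_Acount_l_bound:
  assumes "T \<in> Omega K n \<alpha> \<delta> \<gamma> \<rho> \<mu>" and "(k, j) \<in> IK K" "u \<in> T"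
    and "l \<le> length u" "real l \<le> L" "0 \<le> \<gamma>" "n \<ge> 1"
  shows "\<bar>real (Acount_l T u l k j) - \<mu> k * real l\<bar> \<le> \<gamma> * sqrt (L * ln (real n))"
proof (cases "l = 0")
  case True
  then show ?thesis using assms by (simp add: Acount_l_zero)
next
  case False
  then have "\<bar>real (Acount_l T u l k j) - \<mu> k * real l\<bar> \<le> \<gamma> * sqrt (real l * ln (real n))"
    using assms unfolding Omega_def by fastforce
  also have "\<dots> \<le> \<gamma> * sqrt (L * ln (real n))"
    using assms by (intro mult_left_mono real_sqrt_le_mono mult_right_mono) auto
  finally show ?thesis .
qed

lemma Omega_ancestor_excess_increment:
  assumes T: "T \<in> Omega K n \<alpha> \<delta> \<gamma> \<rho> \<mu>" and kj: "kj \<in> IK K"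
    and "0 \<le> \<gamma>" and n: "n \<ge> 1" and ij: "i < j" "j \<le> n"
    and depth: "\<And>a b. i \<le> a \<Longrightarrow> a \<le> j \<Longrightarrow> i \<le> b \<Longrightarrow> b \<le> j \<Longrightarrow>
      \<bar>real (length (vtx T a)) - real (length (vtx T b))\<bar> \<le> M"
  shows "\<bar>ancestor_excess \<mu> T kj i - ancestor_excess \<mu> T kj j\<bar> \<le> 2 * \<gamma> * sqrt ((M + 1) * ln (real n))"
proof -
  obtain k j' where kj': "kj = (k, j')" by (cases kj)
  have "planar_tree T" "card T = n + 1" using T by (auto simp: Omega_def trees_n_def)
  then have uT: "vtx T i \<in> T" "vtx T j \<in> T"
    using vtx_in_tree[of T] ij by (auto simp: planar_tree_def)
  obtain w where w: "prefix w (vtx T i)" "prefix w (vtx T j)"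
    and branch: "w = vtx T i \<or> (\<exists>k. i < k \<and> k \<le> j \<and> length (vtx T k) = length w + 1)"
    using vtx_branch_point[OF \<open>planar_tree T\<close> ij(1)] ij \<open>card T = n + 1\<close> by auto
  have lw: "length w \<le> length (vtx T i)" "length w \<le> length (vtx T j)"
    using w prefix_length_le by blast+
  have M0: "0 \<le> M" using depth[of i i] ij by simp
  have L: "real (length (vtx T i) - length w) \<le> M + 1 \<and> real (length (vtx T j) - length w) \<le> M + 1"
    using branch
  proof
    assume "w = vtx T i"
    then show ?thesis using depth[of j i] ij M0 lw by (simp add: of_nat_diff)
  next
    assume "\<exists>k. i < k \<and> k \<le> j \<and> length (vtx T k) = length w + 1"
    then obtain k where "i < k" "k \<le> j" "length (vtx T k) = length w + 1" by blast
    then show ?thesis using depth[of i k] depth[of j k] ij lw by (simp add: of_nat_diff abs_le_iff)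
  qed
  have "\<bar>ancestor_excess \<mu> T kj i - ancestor_excess \<mu> T kj j\<bar>
    = \<bar>(real (Acount_l T (vtx T i) (length (vtx T i) - length w) k j') - \<mu> k * real (length (vtx T i) - length w))
     - (real (Acount_l T (vtx T j) (length (vtx T j) - length w) k j') - \<mu> k * real (length (vtx T j) - length w))\<bar>"
    unfolding ancestor_excess_def kj' using Acount_centred_diff[OF w, of T k j' "\<mu> k"] by simp
  also have "\<dots> \<le> \<gamma> * sqrt ((M + 1) * ln (real n)) + \<gamma> * sqrt ((M + 1) * ln (real n))"
    using Omega_Acount_l_bound[OF T kj[unfolded kj'] uT(1) _ _ \<open>0 \<le> \<gamma>\<close> n, of _ "M + 1"]
      Omega_Acount_l_bound[OF T kj[unfolded kj'] uT(2) _ _ \<open>0 \<le> \<gamma>\<close> n, of _ "M + 1"] L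
    by (smt (verit) diff_le_self)
  finally show ?thesis by simp
qed

lemma Omega_ancestor_excess_holder_less:
  assumes T: "T \<in> Omega K n (2/5) \<delta> \<gamma> \<rho> \<mu>" and kj: "kj \<in> IK K"
    and "0 \<le> \<gamma>" "0 \<le> \<delta>" and n: "n \<ge> 1" and ij: "i < j" "j \<le> n"
  shows "\<bar>ancestor_excess \<mu> T kj i - ancestor_excess \<mu> T kj j\<bar>
           \<le> 2 * \<gamma> * sqrt ((\<delta> + 1) * ln (real n)) * real n powr (1/20) * (real j - real i) powr (1/5)"
proof -
  define A where "A = real n powr (1/10) * (real j - real i) powr (2/5)"
  have A1: "1 \<le> A" unfolding A_def using n ij by (intro mult_ge1_I ge_one_powr_ge_zero) auto
  have scale: "sqrt (real n) * ((real j - real i) / real n) powr (2/5) = A"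
  proof -
    have "sqrt (real n) * ((real j - real i) / real n) powr (2/5)
        = real n powr (1/2) / real n powr (2/5) * (real j - real i) powr (2/5)"
      using n ij by (simp add: powr_half_sqrt powr_divide)
    also have "real n powr (1/2) / real n powr (2/5) = real n powr (1/10)"
      by (simp add: powr_diff[symmetric])
    finally show ?thesis unfolding A_def .
  qed
  have "\<bar>real (length (vtx T a)) - real (length (vtx T b))\<bar> \<le> \<delta> * A"
    if "i \<le> a" "a \<le> j" "i \<le> b" "b \<le> j" for a b
  proof -
    have "\<bar>real (length (vtx T a)) - real (length (vtx T b))\<bar>
       \<le> \<delta> * sqrt (real n) * (\<bar>real b - real a\<bar> / real n) powr (2/5)"
      using Omega_depth_holder[OF T] that ij n by simp
    also have "\<dots> \<le> \<delta> * sqrt (real n) * ((real j - real i) / real n) powr (2/5)"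
      using that \<open>0 \<le> \<delta>\<close> by (intro mult_left_mono powr_mono2 divide_right_mono) auto
    finally show ?thesis using scale by (simp add: mult.assoc)
  qed
  then have "\<bar>ancestor_excess \<mu> T kj i - ancestor_excess \<mu> T kj j\<bar> \<le> 2 * \<gamma> * sqrt ((\<delta> * A + 1) * ln (real n))"
    by (rule Omega_ancestor_excess_increment[OF T kj \<open>0 \<le> \<gamma>\<close> n ij])
  also have "\<dots> \<le> 2 * \<gamma> * sqrt ((\<delta> + 1) * ln (real n) * A)"
    using mult_right_mono[OF A1, of "ln (real n)"] n \<open>0 \<le> \<gamma>\<close>
    by (intro mult_left_mono real_sqrt_le_mono) (auto simp: algebra_simps)
  also have "sqrt A = real n powr (1/20) * (real j - real i) powr (1/5)"
    using A1 unfolding A_def by (simp add: powr_half_sqrt[symmetric] powr_mult powr_powr)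
  then have "sqrt ((\<delta> + 1) * ln (real n) * A)
      = sqrt ((\<delta> + 1) * ln (real n)) * real n powr (1/20) * (real j - real i) powr (1/5)"
    by (simp add: real_sqrt_mult)
  finally show ?thesis by (simp add: mult.assoc)
qed

lemma Omega_Gproc_holder:
  assumes T: "T \<in> Omega K n (2/5) \<delta> \<gamma> \<rho> \<mu>" and kj: "kj \<in> IK K"
    and "0 \<le> \<gamma>" "0 \<le> \<delta>" and n: "n \<ge> 1" and "s \<in> {0..1}" "t \<in> {0..1}"
  shows "\<bar>Gproc \<mu> n T kj s - Gproc \<mu> n T kj t\<bar> \<le> 6 * \<gamma> * sqrt ((\<delta> + 1) * ln (real n)) * \<bar>s - t\<bar> powr (1/5)"
proof -
  define C where "C = 2 * \<gamma> * sqrt ((\<delta> + 1) * ln (real n)) * real n powr (1/20)"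
  have C0: "0 \<le> C" unfolding C_def using assms by simp
  have holder: "\<bar>ancestor_excess \<mu> T kj i - ancestor_excess \<mu> T kj j\<bar> \<le> C * \<bar>real i - real j\<bar> powr (1/5)"
    if "i \<le> n" "j \<le> n" for i j
    using Omega_ancestor_excess_holder_less[OF T kj \<open>0 \<le> \<gamma>\<close> \<open>0 \<le> \<delta>\<close> n, of i j]
      Omega_ancestor_excess_holder_less[OF T kj \<open>0 \<le> \<gamma>\<close> \<open>0 \<le> \<delta>\<close> n, of j i] that
    unfolding C_def by (cases i j rule: linorder_cases) (auto simp: abs_minus_commute)
  have "real n * s \<in> {0..real n}" "real n * t \<in> {0..real n}"
    using assms by (auto simp: mult_left_le)
  then have "\<bar>interp (ancestor_excess \<mu> T kj) (real n * s) - interp (ancestor_excess \<mu> T kj) (real n * t)\<bar>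
      \<le> 3 * C * \<bar>real n * s - real n * t\<bar> powr (1/5)"
    by (intro interp_holder[OF C0 _ _ holder]) auto
  then have "\<bar>Gproc \<mu> n T kj s - Gproc \<mu> n T kj t\<bar>
      \<le> real n powr (-1/4) * (3 * C * \<bar>real n * s - real n * t\<bar> powr (1/5))"
    unfolding Gproc_eq right_diff_distrib[symmetric] abs_mult by (simp add: mult_left_mono)
  also have "\<bar>real n * s - real n * t\<bar> powr (1/5) = real n powr (1/5) * \<bar>s - t\<bar> powr (1/5)"
    by (simp add: right_diff_distrib[symmetric] abs_mult powr_mult)
  also have "real n powr (-1/4) * (3 * C * (real n powr (1/5) * \<bar>s - t\<bar> powr (1/5)))
      = 6 * \<gamma> * sqrt ((\<delta> + 1) * ln (real n)) * \<bar>s - t\<bar> powr (1/5)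
        * (real n powr (-1/4) * real n powr (1/20) * real n powr (1/5))"
    unfolding C_def by (simp add: mult_ac)
  also have "real n powr (-1/4) * real n powr (1/20) * real n powr (1/5) = 1"
    using n by (simp add: powr_add[symmetric])
  finally show ?thesis by simp
qed

lemma Omega_G_l1dist_le:
  assumes "T \<in> Omega K n (2/5) \<delta> \<gamma> \<rho> \<mu>"
    and "0 \<le> \<gamma>" "0 \<le> \<delta>" and n: "n \<ge> 3"
    and "s \<in> {0..1}" "t \<in> {0..1}" and st: "\<bar>s - t\<bar> \<le> ln (real n) powr (-3)"
  shows "G_l1dist \<mu> K n T s t \<le> real (card (IK K)) * 6 * \<gamma> * sqrt (\<delta> + 1) * \<bar>s - t\<bar> powr (1/30)"
proof (cases "s = t")
  case True
  then show ?thesis by (simp add: G_l1dist_def)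
next
  case False
  have "G_l1dist \<mu> K n T s t \<le> (\<Sum>kj\<in>IK K. 6 * \<gamma> * sqrt ((\<delta> + 1) * ln (real n)) * \<bar>s - t\<bar> powr (1/5))"
    unfolding G_l1dist_def using assms by (intro sum_mono Omega_Gproc_holder) auto
  also have "\<dots> = real (card (IK K)) * 6 * \<gamma> * sqrt (\<delta> + 1) * (sqrt (ln (real n)) * \<bar>s - t\<bar> powr (1/5))"
    by (simp add: real_sqrt_mult mult_ac)
  also have "sqrt (ln (real n)) \<le> \<bar>s - t\<bar> powr (-1/6)"
  proof -
    have "sqrt (ln (real n)) = (ln (real n) powr (-3)) powr (-1/6)"
      using n by (simp add: powr_powr powr_half_sqrt[symmetric])
    also have "\<dots> \<le> \<bar>s - t\<bar> powr (-1/6)"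
      using False st by (intro powr_mono2') auto
    finally show ?thesis .
  qed
  then have "real (card (IK K)) * 6 * \<gamma> * sqrt (\<delta> + 1) * (sqrt (ln (real n)) * \<bar>s - t\<bar> powr (1/5))
      \<le> real (card (IK K)) * 6 * \<gamma> * sqrt (\<delta> + 1) * (\<bar>s - t\<bar> powr (-1/6) * \<bar>s - t\<bar> powr (1/5))"
    using assms by (intro mult_left_mono mult_right_mono) auto
  also have "\<bar>s - t\<bar> powr (-1/6) * \<bar>s - t\<bar> powr (1/5) = \<bar>s - t\<bar> powr (1/30)"
    by (simp add: powr_add[symmetric])
  finally show ?thesis .
qed

lemma Omega_G_l1dist_powr_le:
  assumes "T \<in> Omega K n (2/5) \<delta> \<gamma> \<rho> \<mu>"
    and "0 \<le> \<gamma>" "0 \<le> \<delta>" and n: "n \<ge> 3"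
    and "s \<in> {0..1}" "t \<in> {0..1}" and st: "\<bar>s - t\<bar> \<le> ln (real n) powr (-3)" and "0 < \<beta>"
  shows "G_l1dist \<mu> K n T s t powr \<beta>
           \<le> (real (card (IK K)) * 6 * \<gamma> * sqrt (\<delta> + 1)) powr \<beta> * \<bar>s - t\<bar> powr (\<beta> / 30)"
proof -
  have "G_l1dist \<mu> K n T s t powr \<beta>
      \<le> (real (card (IK K)) * 6 * \<gamma> * sqrt (\<delta> + 1) * \<bar>s - t\<bar> powr (1/30)) powr \<beta>"
    using Omega_G_l1dist_le[OF assms(1-7)] \<open>0 < \<beta>\<close>
    by (intro powr_mono2) (auto simp: G_l1dist_def sum_nonneg)
  then show ?thesis using assms by (simp add: powr_mult powr_powr)
qed

lemma En_le_bound: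
  assumes "\<And>k. 0 \<le> \<mu> k" "\<And>T. T \<in> trees_n n \<Longrightarrow> f T \<le> B" "0 \<le> B"
  shows "En \<mu> n f \<le> B"
proof -
  have w0: "0 \<le> gw_weight \<mu> T" for T
    unfolding gw_weight_def using assms(1) by (simp add: prod_nonneg)
  have "(\<Sum>T\<in>trees_n n. gw_weight \<mu> T * f T) \<le> (\<Sum>T\<in>trees_n n. gw_weight \<mu> T * B)"
    using w0 assms(2) by (intro sum_mono mult_left_mono) auto
  also have "\<dots> = B * gw_Z \<mu> n" unfolding gw_Z_def by (simp add: sum_distrib_left mult_ac)
  finally have "(\<Sum>T\<in>trees_n n. gw_weight \<mu> T * f T) \<le> B * gw_Z \<mu> n" .
  moreover have "0 \<le> gw_Z \<mu> n" unfolding gw_Z_def using w0 by (simp add: sum_nonneg)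
  ultimately show ?thesis
    using assms(3) unfolding En_def by (cases "gw_Z \<mu> n = 0") (auto simp: divide_le_eq)
qed

theorem lemma19:
  fixes \<mu> :: "nat \<Rightarrow> real" and K :: nat and \<nu> :: "nat \<Rightarrow> (nat \<Rightarrow> real) measure"
    and \<epsilon> \<alpha> \<delta> \<gamma> \<rho> \<alpha>' a :: real
  assumes "H1 \<mu> K" and "H2 \<mu> K \<nu>"
    and "\<epsilon> > 0" and "\<alpha> = 2/5" and "\<delta> > 0" and "\<gamma> > 0" and "\<rho> > 0"
    and "\<forall>\<^sub>F n in sequentially. gw_Z \<mu> n > 0 \<longrightarrow> Pn \<mu> n (Omega K n \<alpha> \<delta> \<gamma> \<rho> \<mu>) \<ge> 1 - \<epsilon>"
    and "\<alpha>' > 0" and "a > 0"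
  shows "\<exists>\<beta>>0. \<exists>c>0. \<forall>\<^sub>F n in sequentially. \<forall>s\<in>{0..1}. \<forall>t\<in>{0..1}.
           \<bar>s - t\<bar> \<le> ln (real n) powr (-3) \<longrightarrow>
           En \<mu> n (\<lambda>T. G_l1dist \<mu> K n T s t powr \<beta> * indicator (Omega K n \<alpha> \<delta> \<gamma> \<rho> \<mu>) T)
             \<le> c * \<bar>t - s\<bar> powr (1 + a)"
proof -
  define D where "D = real (card (IK K)) * 6 * \<gamma> * sqrt (\<delta> + 1)"
  define \<beta> where "\<beta> = 30 * (1 + a)"
  define c where "c = D powr \<beta> + 1"
  have "0 < \<beta>" "0 < c" using assms unfolding \<beta>_def c_def by (auto intro: add_nonneg_pos)
  have bound: "En \<mu> n (\<lambda>T. G_l1dist \<mu> K n T s t powr \<beta> * indicator (Omega K n \<alpha> \<delta> \<gamma> \<rho> \<mu>) T)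
      \<le> c * \<bar>t - s\<bar> powr (1 + a)"
    if "n \<ge> 3" "s \<in> {0..1}" "t \<in> {0..1}" "\<bar>s - t\<bar> \<le> ln (real n) powr (-3)" for n s t
  proof (rule En_le_bound)
    show "0 \<le> \<mu> k" for k using \<open>H1 \<mu> K\<close> by (simp add: H1_def)
    show "0 \<le> c * \<bar>t - s\<bar> powr (1 + a)" using \<open>0 < c\<close> by simp
    have le_c: "D powr \<beta> * \<bar>t - s\<bar> powr (1 + a) \<le> c * \<bar>t - s\<bar> powr (1 + a)"
      unfolding c_def by (intro mult_right_mono) auto
    show "G_l1dist \<mu> K n T s t powr \<beta> * indicator (Omega K n \<alpha> \<delta> \<gamma> \<rho> \<mu>) T
        \<le> c * \<bar>t - s\<bar> powr (1 + a)" for T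
    proof (cases "T \<in> Omega K n \<alpha> \<delta> \<gamma> \<rho> \<mu>")
      case True
      have "T \<in> Omega K n (2/5) \<delta> \<gamma> \<rho> \<mu>" using True assms by simp
      then have "G_l1dist \<mu> K n T s t powr \<beta> \<le> D powr \<beta> * \<bar>s - t\<bar> powr (\<beta> / 30)"
        unfolding D_def using that assms \<open>0 < \<beta>\<close> by (intro Omega_G_l1dist_powr_le) auto
      moreover have "\<beta> / 30 = 1 + a" unfolding \<beta>_def by simp
      ultimately have "G_l1dist \<mu> K n T s t powr \<beta> \<le> D powr \<beta> * \<bar>t - s\<bar> powr (1 + a)"
        by (simp only: abs_minus_commute)
      then show ?thesis using True le_c by simp
    qed (use \<open>0 < c\<close> in simp)
  qed
  have "\<forall>\<^sub>F n in sequentially. \<forall>s\<in>{0..1}. \<forall>t\<in>{0..1}. \<bar>s - t\<bar> \<le> ln (real n) powr (-3) \<longrightarrow>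
      En \<mu> n (\<lambda>T. G_l1dist \<mu> K n T s t powr \<beta> * indicator (Omega K n \<alpha> \<delta> \<gamma> \<rho> \<mu>) T)
        \<le> c * \<bar>t - s\<bar> powr (1 + a)"
    using eventually_ge_at_top[of 3] by eventually_elim (use bound in blast)
  then show ?thesis using \<open>0 < \<beta>\<close> \<open>0 < c\<close> by blast
qed

end
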